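(* If $S\subseteq\mathbb{N}^{\mathbb{N}}$ is defined by a sentence $\phi$ of $\mathscr{L}_{\max}$ without nested quantifiers (that is, no quantifier appears in the scope of another quantifier), then $S$ is guessable.
   Context: A function $G:\mathbb{N}^{<\mathbb{N}}\to\{0,1\}$ ($\mathbb{N}^{<\mathbb{N}}$ = finite sequences of naturals) is a guesser for $S\subseteq\mathbb{N}^{\mathbb{N}}$ if for every $f:\mathbb{N}\to\mathbb{N}$ there is $m>0$ such that for all $n>m$, $G(f(0),\ldots,f(n))$ equals $1$ if $f\in S$ and $0$ if $f\notin S$; $S$ is guessable if it has a guesser. The language $\mathscr{L}_{\max}$ is a first-order language extended with ellipses: constant symbols $\mathbf{n}$ (also $\bar n$) for each $n\in\mathbb{N}$; an $n$-ary function symbol $\tilde w$ for each $w:\mathbb{N}^n\to\mathbb{N}$ ($n>0$); an $n$-ary predicate symbol $\tilde p$ for each $p\subseteq\mathbb{N}^n$ ($n>0$); an $\mathbb{N}^{<\mathbb{N}}$-ary function symbol $\tilde G$ for each $G:\mathbb{N}^{<\mathbb{N}}\to\mathbb{N}$ (applicable to any finite number of arguments); a unary function symbol $\mathbf{f}$; and a symbol $\cdots_x$ for each variable $x$. Besides the usual terms, for $\mathbb{N}^{<\mathbb{N}}$-ary $G$, terms $u,v$ and variable $x$, $G(u(\mathbf{0}),\cdots_x,u(v))$ is a term with free variables $(FV(u)\setminus\{x\})\cup FV(v)$. Formulas are built as usual. For $f:\mathbb{N}\to\mathbb{N}$, $\mathscr{M}_f$ is the structure on $\mathbb{N}$ interpreting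 every symbol as the object it names and $\mathbf{f}$ as $f$; terms are evaluated as usual, plus $G(u(\mathbf{0}),\cdots_x,u(v))^{s}=G\big(u(x|\mathbf{0})^{s},\ldots,u(x|\overline{v^{s}})^{s}\big)$ under an assignment $s$, where $u(x|c)$ is substitution of the constant $c$ for $x$ in $u$. A sentence $\phi$ defines $S\subseteq\mathbb{N}^{\mathbb{N}}$ if for every $f:\mathbb{N}\to\mathbb{N}$, $\mathscr{M}_f\models\phi$ iff $f\in S$. *)

theory Defs
  imports Main
begin

text \<open>An n-ary function symbol (n>0) for w : N^n -> N is represented by a function
  on lists applied to a list of n argument terms; likewise for predicate symbols.
  An N^{<N}-ary function symbol G is applied to any finite list of terms.\<close>

datatype trm =
    Var nat
  | Cst nat
  | Fn "nat list \<Rightarrow> nat" "trm list"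
  | GFn "nat list \<Rightarrow> nat" "trm list"
  | F trm
  | Ell "nat list \<Rightarrow> nat" trm nat trm        \<comment> \<open>Ell G u x v  =  G(u(0), ..._x, u(v))\<close>

datatype fm =
    Eq trm trm
  | Pred "nat list \<Rightarrow> bool" "trm list"
  | Neg fm
  | Conj fm fm
  | Disj fm fm
  | Imp fm fm
  | Iff fm fm
  | All nat fm
  | Ex nat fm

primrec wf_trm :: "trm \<Rightarrow> bool" where
  "wf_trm (Var x) = True"
| "wf_trm (Cst n) = True"
| "wf_trm (Fn w ts) = (ts \<noteq> [] \<and> list_all wf_trm ts)"
| "wf_trm (GFn g ts) = list_all wf_trm ts"
| "wf_trm (F t) = wf_trm t"
| "wf_trm (Ell g u x v) = (wf_trm u \<and> wf_trm v)"

primrec wf_fm :: "fm \<Rightarrow> bool" where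
  "wf_fm (Eq t1 t2) = (wf_trm t1 \<and> wf_trm t2)"
| "wf_fm (Pred p ts) = (ts \<noteq> [] \<and> list_all wf_trm ts)"
| "wf_fm (Neg \<phi>) = wf_fm \<phi>"
| "wf_fm (Conj \<phi> \<psi>) = (wf_fm \<phi> \<and> wf_fm \<psi>)"
| "wf_fm (Disj \<phi> \<psi>) = (wf_fm \<phi> \<and> wf_fm \<psi>)"
| "wf_fm (Imp \<phi> \<psi>) = (wf_fm \<phi> \<and> wf_fm \<psi>)"
| "wf_fm (Iff \<phi> \<psi>) = (wf_fm \<phi> \<and> wf_fm \<psi>)"
| "wf_fm (All x \<phi>) = wf_fm \<phi>"
| "wf_fm (Ex x \<phi>) = wf_fm \<phi>"

primrec FV_trm :: "trm \<Rightarrow> nat set" where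
  "FV_trm (Var x) = {x}"
| "FV_trm (Cst n) = {}"
| "FV_trm (Fn w ts) = \<Union> (set (map FV_trm ts))"
| "FV_trm (GFn g ts) = \<Union> (set (map FV_trm ts))"
| "FV_trm (F t) = FV_trm t"
| "FV_trm (Ell g u x v) = (FV_trm u - {x}) \<union> FV_trm v"

primrec FV_fm :: "fm \<Rightarrow> nat set" where
  "FV_fm (Eq t1 t2) = FV_trm t1 \<union> FV_trm t2"
| "FV_fm (Pred p ts) = \<Union> (set (map FV_trm ts))"
| "FV_fm (Neg \<phi>) = FV_fm \<phi>"
| "FV_fm (Conj \<phi> \<psi>) = FV_fm \<phi> \<union> FV_fm \<psi>"
| "FV_fm (Disj \<phi> \<psi>) = FV_fm \<phi> \<union> FV_fm \<psi>"
| "FV_fm (Imp \<phi> \<psi>) = FV_fm \<phi> \<union> FV_fm \<psi>"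
| "FV_fm (Iff \<phi> \<psi>) = FV_fm \<phi> \<union> FV_fm \<psi>"
| "FV_fm (All x \<phi>) = FV_fm \<phi> - {x}"
| "FV_fm (Ex x \<phi>) = FV_fm \<phi> - {x}"

definition sentence :: "fm \<Rightarrow> bool" where
  "sentence \<phi> \<longleftrightarrow> wf_fm \<phi> \<and> FV_fm \<phi> = {}"

primrec qdepth :: "fm \<Rightarrow> nat" where
  "qdepth (Eq t1 t2) = 0"
| "qdepth (Pred p ts) = 0"
| "qdepth (Neg \<phi>) = qdepth \<phi>"
| "qdepth (Conj \<phi> \<psi>) = max (qdepth \<phi>) (qdepth \<psi>)"
| "qdepth (Disj \<phi> \<psi>) = max (qdepth \<phi>) (qdepth \<psi>)"
| "qdepth (Imp \<phi> \<psi>) = max (qdepth \<phi>) (qdepth \<psi>)"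
| "qdepth (Iff \<phi> \<psi>) = max (qdepth \<phi>) (qdepth \<psi>)"
| "qdepth (All x \<phi>) = Suc (qdepth \<phi>)"
| "qdepth (Ex x \<phi>) = Suc (qdepth \<phi>)"

definition no_nested_quantifiers :: "fm \<Rightarrow> bool" where
  "no_nested_quantifiers \<phi> \<longleftrightarrow> qdepth \<phi> \<le> 1"

text \<open>Semantics in M_f under assignment s. The ellipsis term is evaluated as
  G(u^{s[x:=0]}, ..., u^{s[x:=v^s]}), which is the value of u(x|i)^s.\<close>
primrec eval :: "(nat \<Rightarrow> nat) \<Rightarrow> (nat \<Rightarrow> nat) \<Rightarrow> trm \<Rightarrow> nat" where
  "eval f s (Var x) = s x"
| "eval f s (Cst n) = n"
| "eval f s (Fn w ts) = w (map (eval f s) ts)"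
| "eval f s (GFn g ts) = g (map (eval f s) ts)"
| "eval f s (F t) = f (eval f s t)"
| "eval f s (Ell g u x v) = g (map (\<lambda>i. eval f (s(x := i)) u) [0..<Suc (eval f s v)])"

primrec sat :: "(nat \<Rightarrow> nat) \<Rightarrow> (nat \<Rightarrow> nat) \<Rightarrow> fm \<Rightarrow> bool" where
  "sat f s (Eq t1 t2) = (eval f s t1 = eval f s t2)"
| "sat f s (Pred p ts) = p (map (eval f s) ts)"
| "sat f s (Neg \<phi>) = (\<not> sat f s \<phi>)"
| "sat f s (Conj \<phi> \<psi>) = (sat f s \<phi> \<and> sat f s \<psi>)"
| "sat f s (Disj \<phi> \<psi>) = (sat f s \<phi> \<or> sat f s \<psi>)"
| "sat f s (Imp \<phi> \<psi>) = (sat f s \<phi> \<longrightarrow> sat f s \<psi>)"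
| "sat f s (Iff \<phi> \<psi>) = (sat f s \<phi> \<longleftrightarrow> sat f s \<psi>)"
| "sat f s (All x \<phi>) = (\<forall>n. sat f (s(x := n)) \<phi>)"
| "sat f s (Ex x \<phi>) = (\<exists>n. sat f (s(x := n)) \<phi>)"

text \<open>M_f |= phi for a sentence (value independent of the assignment).\<close>
definition models :: "(nat \<Rightarrow> nat) \<Rightarrow> fm \<Rightarrow> bool" where
  "models f \<phi> \<longleftrightarrow> (\<forall>s. sat f s \<phi>)"

definition defines_set :: "fm \<Rightarrow> (nat \<Rightarrow> nat) set \<Rightarrow> bool" where
  "defines_set \<phi> S \<longleftrightarrow> sentence \<phi> \<and> (\<forall>f. models f \<phi> \<longleftrightarrow> f \<in> S)"

text \<open>Guessers: outputs 0/1 represented as False/True; G(f(0),...,f(n)) = G (map f [0..<n+1]).\<close>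
definition guesser :: "(nat list \<Rightarrow> bool) \<Rightarrow> (nat \<Rightarrow> nat) set \<Rightarrow> bool" where
  "guesser G S \<longleftrightarrow> (\<forall>f. \<exists>m>0. \<forall>n>m. G (map f [0..<Suc n]) = (f \<in> S))"

definition guessable :: "(nat \<Rightarrow> nat) set \<Rightarrow> bool" where
  "guessable S \<longleftrightarrow> (\<exists>G. guesser G S)"

end

theory Submission
  imports Defs "HOL-Library.More_List"
begin

text \<open>
  Evaluating a quantifier-free formula in \<open>\<M>\<^sub>f\<close> queries \<open>f\<close> at only finitely many
  points, so once the observed prefix \<open>f(0), \<dots>, f(n)\<close> covers them, the formula has the same
  truth value in \<open>f\<close> as in the zero-extension of the prefix. For \<open>\<exists>x \<psi>\<close> with \<open>\<psi>\<close>
  quantifier-free, guess "true" iff some \<open>i \<le> n\<close> satisfies \<open>\<psi>(i)\<close> in the zero-extension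
  with all queries inside the prefix: such a certified witness reads only true values of \<open>f\<close>,
  so it is a genuine witness, and every genuine witness is certified from some \<open>n\<close> on.
  Universal quantifiers are handled dually, and Boolean combinations of eventually correct
  guesses are eventually correct.
\<close>

lemma eval_cong_assignment:
  "\<forall>y\<in>FV_trm t. s y = s' y \<Longrightarrow> eval f s t = eval f s' t"
proof (induction t arbitrary: s s')
  case (Fn w ts)
  then have "eval f s t = eval f s' t" if "t \<in> set ts" for t
    using that by auto
  then show ?case by (simp cong: map_cong)
next
  case (GFn G ts)
  then have "eval f s t = eval f s' t" if "t \<in> set ts" for t
    using that by auto
  then show ?case by (simp cong: map_cong)
next
  case (F t)
  then have "eval f s t = eval f s' t" by simp
  then show ?case by simp
next
  case (Ell G u x v)
  then have "eval f s v = eval f s' v" by simp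
  moreover have "eval f (s(x := i)) u = eval f (s'(x := i)) u" for i
    using Ell by simp
  ultimately show ?case by simp
qed auto

lemma sat_cong_assignment:
  "\<forall>y\<in>FV_fm \<phi>. s y = s' y \<Longrightarrow> sat f s \<phi> = sat f s' \<phi>"
proof (induction \<phi> arbitrary: s s')
  case (Eq t1 t2)
  then show ?case using eval_cong_assignment[of t1 s s' f] eval_cong_assignment[of t2 s s' f] by auto
next
  case (Pred p ts)
  then show ?case using eval_cong_assignment[of _ s s' f] by (auto cong: map_cong)
next
  case (Neg \<phi>)
  then show ?case by simp
next
  case (Conj \<phi> \<psi>)
  then have "sat f s \<phi> = sat f s' \<phi>" and "sat f s \<psi> = sat f s' \<psi>" by simp_all
  then show ?case by simp
next
  case (Disj \<phi> \<psi>)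
  then have "sat f s \<phi> = sat f s' \<phi>" and "sat f s \<psi> = sat f s' \<psi>" by simp_all
  then show ?case by simp
next
  case (Imp \<phi> \<psi>)
  then have "sat f s \<phi> = sat f s' \<phi>" and "sat f s \<psi> = sat f s' \<psi>" by simp_all
  then show ?case by simp
next
  case (Iff \<phi> \<psi>)
  then have "sat f s \<phi> = sat f s' \<phi>" and "sat f s \<psi> = sat f s' \<psi>" by simp_all
  then show ?case by simp
next
  case (All x \<phi>)
  then have "sat f (s(x := n)) \<phi> = sat f (s'(x := n)) \<phi>" for n by auto
  then show ?case by simp
next
  case (Ex x \<phi>)
  then have "sat f (s(x := n)) \<phi> = sat f (s'(x := n)) \<phi>" for n by auto
  then show ?case by simp
qed

lemma models_iff_sat:
  assumes "sentence \<phi>"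
  shows "models f \<phi> \<longleftrightarrow> sat f s \<phi>"
  using assms sat_cong_assignment[of \<phi> _ s f]
  unfolding sentence_def models_def by auto

primrec queries_trm :: "(nat \<Rightarrow> nat) \<Rightarrow> (nat \<Rightarrow> nat) \<Rightarrow> trm \<Rightarrow> nat set" where
  "queries_trm f s (Var x) = {}"
| "queries_trm f s (Cst n) = {}"
| "queries_trm f s (Fn w ts) = \<Union> (set (map (queries_trm f s) ts))"
| "queries_trm f s (GFn g ts) = \<Union> (set (map (queries_trm f s) ts))"
| "queries_trm f s (F t) = insert (eval f s t) (queries_trm f s t)"
| "queries_trm f s (Ell g u x v) =
     queries_trm f s v \<union> (\<Union>i\<le>eval f s v. queries_trm f (s(x := i)) u)"

lemma finite_queries_trm: "finite (queries_trm f s t)"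
  by (induction t arbitrary: s) auto

lemma eval_queries_trm_cong:
  "\<forall>k\<in>queries_trm f s t. g k = f k \<Longrightarrow>
     eval g s t = eval f s t \<and> queries_trm g s t = queries_trm f s t"
proof (induction t arbitrary: s)
  case (Ell G u x v)
  then have "eval g s v = eval f s v" "queries_trm g s v = queries_trm f s v"
    by auto
  moreover have "eval g (s(x := i)) u = eval f (s(x := i)) u \<and>
      queries_trm g (s(x := i)) u = queries_trm f (s(x := i)) u" if "i \<le> eval f s v" for i
    by (rule Ell.IH(1)) (use Ell.prems that in \<open>auto simp del: fun_upd_apply\<close>)
  ultimately show ?case
    by (auto simp del: upt_Suc intro!: arg_cong[where f = G] map_cong)
qed (auto cong: map_cong SUP_cong)

primrec queries_fm :: "(nat \<Rightarrow> nat) \<Rightarrow> (nat \<Rightarrow> nat) \<Rightarrow> fm \<Rightarrow> nat set" where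
  "queries_fm f s (Eq t1 t2) = queries_trm f s t1 \<union> queries_trm f s t2"
| "queries_fm f s (Pred p ts) = \<Union> (set (map (queries_trm f s) ts))"
| "queries_fm f s (Neg \<phi>) = queries_fm f s \<phi>"
| "queries_fm f s (Conj \<phi> \<psi>) = queries_fm f s \<phi> \<union> queries_fm f s \<psi>"
| "queries_fm f s (Disj \<phi> \<psi>) = queries_fm f s \<phi> \<union> queries_fm f s \<psi>"
| "queries_fm f s (Imp \<phi> \<psi>) = queries_fm f s \<phi> \<union> queries_fm f s \<psi>"
| "queries_fm f s (Iff \<phi> \<psi>) = queries_fm f s \<phi> \<union> queries_fm f s \<psi>"
| "queries_fm f s (All x \<phi>) = {}"  \<comment> \<open>junk: only used for quantifier-free formulas\<close>
| "queries_fm f s (Ex x \<phi>) = {}"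

lemma finite_queries_fm: "finite (queries_fm f s \<phi>)"
  by (induction \<phi>) (auto simp: finite_queries_trm)

lemma sat_queries_fm_cong:
  "qdepth \<phi> = 0 \<Longrightarrow> \<forall>k\<in>queries_fm f s \<phi>. g k = f k \<Longrightarrow>
     sat g s \<phi> = sat f s \<phi> \<and> queries_fm g s \<phi> = queries_fm f s \<phi>"
proof (induction \<phi>)
  case (Eq t1 t2)
  then show ?case using eval_queries_trm_cong[of f s t1 g] eval_queries_trm_cong[of f s t2 g] by simp
next
  case (Pred p ts)
  then have "eval g s t = eval f s t \<and> queries_trm g s t = queries_trm f s t" if "t \<in> set ts" for t
    using that by (intro eval_queries_trm_cong) auto
  then show ?case by (auto cong: map_cong SUP_cong)
qed auto

lemma eventually_prefix_agrees:
  assumes "finite A"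
  shows "eventually (\<lambda>n. \<forall>k\<in>A. nth_default 0 (map f [0..<n]) k = f k) sequentially"
proof -
  obtain N where "\<forall>k\<in>A. k < N"
    using assms finite_nat_set_iff_bounded by blast
  then show ?thesis
    by (intro eventually_sequentiallyI[of N]) (auto simp: nth_default_def)
qed

lemma eventually_sat_prefix:
  assumes "qdepth \<phi> = 0"
  shows "eventually (\<lambda>n. sat (nth_default 0 (map f [0..<n])) s \<phi> = sat f s \<phi>) sequentially"
  using eventually_prefix_agrees[OF finite_queries_fm, of f s \<phi> f]
  by (rule eventually_mono) (use sat_queries_fm_cong[OF assms] in blast)

definition certified_witness :: "nat list \<Rightarrow> (nat \<Rightarrow> nat) \<Rightarrow> nat \<Rightarrow> fm \<Rightarrow> bool \<Rightarrow> bool" where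
  "certified_witness l s x \<phi> b \<longleftrightarrow>
     (\<exists>i<length l. sat (nth_default 0 l) (s(x := i)) \<phi> = b \<and>
        queries_fm (nth_default 0 l) (s(x := i)) \<phi> \<subseteq> {..<length l})"

lemma certified_witness_sound:
  assumes "qdepth \<phi> = 0" and "certified_witness (map f [0..<n]) s x \<phi> b"
  shows "\<exists>i. sat f (s(x := i)) \<phi> = b"
proof -
  let ?g = "nth_default 0 (map f [0..<n])"
  obtain i where "sat ?g (s(x := i)) \<phi> = b" and "queries_fm ?g (s(x := i)) \<phi> \<subseteq> {..<n}"
    using assms(2) by (auto simp: certified_witness_def)
  moreover from this(2) have "\<forall>k\<in>queries_fm ?g (s(x := i)) \<phi>. f k = ?g k"
    by (auto simp: nth_default_def)
  ultimately show ?thesis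
    using sat_queries_fm_cong[OF assms(1)] by blast
qed

lemma eventually_certified_witness:
  assumes "qdepth \<phi> = 0" and "sat f (s(x := i)) \<phi> = b"
  shows "eventually (\<lambda>n. certified_witness (map f [0..<n]) s x \<phi> b) sequentially"
proof -
  let ?Q = "queries_fm f (s(x := i)) \<phi>"
  have "finite (insert i ?Q)"
    by (simp add: finite_queries_fm)
  then obtain N where "i < N" and Q_below: "\<forall>k\<in>?Q. k < N"
    unfolding finite_nat_set_iff_bounded by blast
  have "certified_witness (map f [0..<n]) s x \<phi> b" if "N \<le> n" for n
  proof -
    let ?g = "nth_default 0 (map f [0..<n])"
    have "\<forall>k\<in>?Q. ?g k = f k"
      using Q_below that by (auto simp: nth_default_def)
    then have "sat ?g (s(x := i)) \<phi> = b \<and> queries_fm ?g (s(x := i)) \<phi> = ?Q"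
      using sat_queries_fm_cong[OF assms(1)] assms(2) by metis
    moreover have "i < n" and "?Q \<subseteq> {..<n}"
      using \<open>i < N\<close> Q_below that by auto
    ultimately show ?thesis
      unfolding certified_witness_def by (intro exI[of _ i]) simp
  qed
  then show ?thesis
    by (rule eventually_sequentiallyI)
qed

lemma eventually_certified_witness_iff:
  assumes "qdepth \<phi> = 0"
  shows "eventually (\<lambda>n. certified_witness (map f [0..<n]) s x \<phi> b \<longleftrightarrow>
                          (\<exists>i. sat f (s(x := i)) \<phi> = b)) sequentially"
proof (cases "\<exists>i. sat f (s(x := i)) \<phi> = b")
  case True
  then obtain i where "sat f (s(x := i)) \<phi> = b" ..
  then have "eventually (\<lambda>n. certified_witness (map f [0..<n]) s x \<phi> b) sequentially"
    by (rule eventually_certified_witness[OF assms])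
  then show ?thesis
    by (rule eventually_mono) (use True in blast)
next
  case False
  then show ?thesis
    by (intro always_eventually allI) (use certified_witness_sound[OF assms] in blast)
qed

lemma eventually_eq_binop:
  assumes "eventually (\<lambda>n. A n = a) net" and "eventually (\<lambda>n. B n = b) net"
  shows "eventually (\<lambda>n. h (A n) (B n) = h a b) net"
  using eventually_conj[OF assms] by (rule eventually_mono) auto

primrec guess_fm :: "fm \<Rightarrow> (nat \<Rightarrow> nat) \<Rightarrow> nat list \<Rightarrow> bool" where
  "guess_fm (Eq t1 t2) s l = sat (nth_default 0 l) s (Eq t1 t2)"
| "guess_fm (Pred p ts) s l = sat (nth_default 0 l) s (Pred p ts)"
| "guess_fm (Neg \<phi>) s l = (\<not> guess_fm \<phi> s l)"
| "guess_fm (Conj \<phi> \<psi>) s l = (guess_fm \<phi> s l \<and> guess_fm \<psi> s l)"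
| "guess_fm (Disj \<phi> \<psi>) s l = (guess_fm \<phi> s l \<or> guess_fm \<psi> s l)"
| "guess_fm (Imp \<phi> \<psi>) s l = (guess_fm \<phi> s l \<longrightarrow> guess_fm \<psi> s l)"
| "guess_fm (Iff \<phi> \<psi>) s l = (guess_fm \<phi> s l \<longleftrightarrow> guess_fm \<psi> s l)"
| "guess_fm (Ex x \<phi>) s l = certified_witness l s x \<phi> True"
| "guess_fm (All x \<phi>) s l = (\<not> certified_witness l s x \<phi> False)"

lemma eventually_guess_fm:
  "qdepth \<phi> \<le> 1 \<Longrightarrow> eventually (\<lambda>n. guess_fm \<phi> s (map f [0..<n]) = sat f s \<phi>) sequentially"
proof (induction \<phi> arbitrary: s)
  case (Eq t1 t2)
  then show ?case using eventually_sat_prefix[of "Eq t1 t2"] by simp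
next
  case (Pred p ts)
  then show ?case using eventually_sat_prefix[of "Pred p ts"] by simp
next
  case (All x \<phi>)
  then show ?case
    using eventually_certified_witness_iff[of \<phi> f s x False] by (auto elim: eventually_mono)
next
  case (Ex x \<phi>)
  then show ?case
    using eventually_certified_witness_iff[of \<phi> f s x True] by simp
next
  case (Neg \<phi>)
  then show ?case by simp
next
  case (Conj \<phi> \<psi>)
  then show ?case
    unfolding guess_fm.simps sat.simps
    by (intro eventually_eq_binop[where h = "(\<and>)"]) simp_all
next
  case (Disj \<phi> \<psi>)
  then show ?case
    unfolding guess_fm.simps sat.simps
    by (intro eventually_eq_binop[where h = "(\<or>)"]) simp_all
next
  case (Imp \<phi> \<psi>)
  then show ?case
    unfolding guess_fm.simps sat.simps
    by (intro eventually_eq_binop[where h = "(\<longrightarrow>)"]) simp_all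
next
  case (Iff \<phi> \<psi>)
  then show ?case
    unfolding guess_fm.simps sat.simps
    by (intro eventually_eq_binop[where h = "(\<longleftrightarrow>)"]) simp_all
qed

lemma guesser_iff_eventually:
  "guesser G S \<longleftrightarrow> (\<forall>f. eventually (\<lambda>n. G (map f [0..<n]) = (f \<in> S)) sequentially)"
proof -
  have "(\<exists>m>0. \<forall>n>m. P n) \<longleftrightarrow> eventually P sequentially" for P :: "nat \<Rightarrow> bool"
    unfolding eventually_sequentially
    by (metis Suc_le_eq dual_order.strict_trans1 le_less zero_less_Suc)
  then have "(\<exists>m>0. \<forall>n>m. G (map f [0..<Suc n]) = (f \<in> S)) \<longleftrightarrow>
      eventually (\<lambda>n. G (map f [0..<n]) = (f \<in> S)) sequentially" for f
    using eventually_sequentially_Suc[of "\<lambda>n. G (map f [0..<n]) = (f \<in> S)"] by presburger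
  then show ?thesis
    unfolding guesser_def by blast
qed

theorem lemma4p10:
  fixes S :: "(nat \<Rightarrow> nat) set" and \<phi> :: fm
  assumes "defines_set \<phi> S"
    and "no_nested_quantifiers \<phi>"
  shows "guessable S"
proof -
  let ?s = "\<lambda>_. 0"
  have "guesser (guess_fm \<phi> ?s) S"
    unfolding guesser_iff_eventually
  proof
    fix f
    have "f \<in> S \<longleftrightarrow> sat f ?s \<phi>"
      using assms(1) models_iff_sat[of \<phi> f ?s] unfolding defines_set_def by simp
    moreover have "eventually (\<lambda>n. guess_fm \<phi> ?s (map f [0..<n]) = sat f ?s \<phi>) sequentially"
      using assms(2) eventually_guess_fm unfolding no_nested_quantifiers_def by simp
    ultimately show "eventually (\<lambda>n. guess_fm \<phi> ?s (map f [0..<n]) = (f \<in> S)) sequentially"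
      by simp
  qed
  then show ?thesis
    unfolding guessable_def by blast
qed

end
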